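(* Every odometer $(X,T)$ is conjugate to a homeomorphism $\mathfrak{f}\colon C\to C$, where $C\subseteq\mathbb{R}$, such that $\mathfrak{f}'(x)=0$ for every $x\in C$ and $\mathfrak{f}$ extends to a differentiable surjection $\bar{\mathfrak{f}}\colon\mathbb{R}\to\mathbb{R}$.
   Context: A dynamical system is a pair $(X,T)$ with $X$ a compact metric space and $T\colon X\to X$ continuous. A point $x\in X$ is regularly recurrent if for every open $U\ni x$ there is $n\geq 1$ with $T^{in}(x)\in U$ for all $i=0,1,2,\ldots$. $(X,T)$ is equicontinuous if for every $\varepsilon>0$ there is $\delta>0$ such that $d(x,y)<\delta$ implies $d(T^n x,T^n y)<\varepsilon$ for all $n\geq 0$. $(X,T)$ is an odometer if it is equicontinuous and there is a regularly recurrent point whose orbit is dense in $X$. Two systems $(X,T)$, $(Y,S)$ are conjugate if there is a homeomorphism $h\colon X\to Y$ with $h\circ T=S\circ h$. For $C\subseteq\mathbb{R}$ and $f\colon C\to C$, the derivative at $x\in C$ is $f'(x)=\lim_{y\to x,\,y\in C\setminus\{x\}}\frac{f(y)-f(x)}{y-x}$. *)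

theory Defs
  imports "HOL-Analysis.Analysis"
begin

definition dynamical_system :: "'a::metric_space set \<Rightarrow> ('a \<Rightarrow> 'a) \<Rightarrow> bool" where
  "dynamical_system X T \<longleftrightarrow> compact X \<and> T ` X \<subseteq> X \<and> continuous_on X T"

definition regularly_recurrent :: "'a::metric_space set \<Rightarrow> ('a \<Rightarrow> 'a) \<Rightarrow> 'a \<Rightarrow> bool" where
  "regularly_recurrent X T x \<longleftrightarrow> x \<in> X \<and>
     (\<forall>U. openin (top_of_set X) U \<and> x \<in> U \<longrightarrow>
        (\<exists>n::nat. n \<ge> 1 \<and> (\<forall>i::nat. (T ^^ (i * n)) x \<in> U)))"

definition equicontinuous_sys :: "'a::metric_space set \<Rightarrow> ('a \<Rightarrow> 'a) \<Rightarrow> bool" where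
  "equicontinuous_sys X T \<longleftrightarrow>
     (\<forall>\<epsilon>>0. \<exists>\<delta>>0. \<forall>x\<in>X. \<forall>y\<in>X. dist x y < \<delta> \<longrightarrow>
        (\<forall>n::nat. dist ((T ^^ n) x) ((T ^^ n) y) < \<epsilon>))"

definition odometer :: "'a::metric_space set \<Rightarrow> ('a \<Rightarrow> 'a) \<Rightarrow> bool" where
  "odometer X T \<longleftrightarrow> dynamical_system X T \<and> equicontinuous_sys X T \<and>
     (\<exists>x\<in>X. regularly_recurrent X T x \<and> closure {(T ^^ n) x | n::nat. True} = X)"

end

theory Submission
  imports Defs
begin

text \<open>An odometer is the inverse limit of the rotations \<open>x \<mapsto> x + 1\<close> of \<open>\<int>/n\<^sub>k\<close> with
  \<open>n\<^sub>k\<close> dividing \<open>n\<^sub>k\<^sub>+\<^sub>1\<close>: by equicontinuity and regular recurrence, the residues mod \<open>m\<close>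
  by which arbitrarily close orbit points can differ form a subgroup of \<open>\<int>/m\<close>, whose generator
  is the next period, and every point gets compatible, locally constant addresses
  \<open>r\<^sub>k \<in> \<int>/n\<^sub>k\<close>. We embed \<open>X\<close> into \<open>\<real>\<close> by a mixed-radix expansion whose \<open>k\<close>-th digit is
  weighted according to the level-\<open>k\<close> address, with weights decaying so fast that the first
  level at which two points differ dominates their distance. Each step of \<open>T\<close> divides the weight
  by \<open>(k + 1)\<close> times the radix, except at one residue that every point meets at only finitely many
  levels; hence near each point the conjugated map contracts distances by \<open>3/(k + 1)\<close> with
  \<open>k \<rightarrow> \<infinity>\<close>, i.e. it has derivative \<open>0\<close> on the image \<open>C\<close>. Finally a function with
  derivative \<open>0\<close> on a compact \<open>C \<subseteq> \<real>\<close> extends to a differentiable surjection of \<open>\<real>\<close>,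
  interpolating across the gaps of \<open>C\<close> by a smoothstep and continuing quadratically outside.\<close>

section \<open>Extending functions that are flat on a compact set\<close>

lemma has_field_derivative_zero_within_iff:
  fixes f :: "real \<Rightarrow> real"
  shows "(f has_field_derivative 0) (at x within S) \<longleftrightarrow>
    (\<forall>e>0. \<exists>d>0. \<forall>y\<in>S. \<bar>y - x\<bar> < d \<longrightarrow> \<bar>f y - f x\<bar> \<le> e * \<bar>y - x\<bar>)"
  unfolding has_field_derivative_def has_derivative_within_alt
  by (simp add: bounded_linear_mult_right)

definition smoothstep :: "real \<Rightarrow> real" where
  "smoothstep u = 3*u^2 - 2*u^3"

lemma smoothstep_bounds:
  assumes "0 \<le> u" "u \<le> 1"
  shows "0 \<le> smoothstep u" "smoothstep u \<le> 1" "smoothstep u \<le> 3*u^2" "smoothstep u \<le> 3*u"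
proof -
  have "u^2*(3 - 2*u) \<ge> 0" "(1-u)^2*(1+2*u) \<ge> 0" "0 \<le> u^3" "u^2 \<le> u"
    using assms by (simp_all add: power2_eq_square mult_left_le)
  then show "0 \<le> smoothstep u" "smoothstep u \<le> 1" "smoothstep u \<le> 3*u^2" "smoothstep u \<le> 3*u"
    unfolding smoothstep_def by (simp_all add: algebra_simps power2_eq_square power3_eq_cube)
qed

lemma smoothstep_reflect: "smoothstep (1 - u) = 1 - smoothstep u"
  unfolding smoothstep_def by (simp add: algebra_simps power2_eq_square power3_eq_cube)

text \<open>Measured from a point of \<open>C\<close>, a gap has its endpoints at distances \<open>\<alpha> < \<beta>\<close> and
  is evaluated at distance \<open>\<tau>\<close>. Short gaps are controlled by flatness at both endpoints,
  long ones by the quadratic start of the smoothstep.\<close>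

lemma smoothstep_interpolation_estimate:
  fixes \<alpha> \<tau> \<beta> \<delta> e B P Q :: real
  assumes "0 \<le> \<alpha>" "\<alpha> < \<tau>" "\<tau> < \<beta>" "e > 0" "\<tau> < \<delta>/2"
    and P: "\<bar>P\<bar> \<le> e*\<alpha>" and Q: "\<beta> < \<delta> \<Longrightarrow> \<bar>Q\<bar> \<le> e*\<beta>"
    and B: "\<bar>Q - P\<bar> \<le> 2*B" "2*B*\<tau> \<le> e*(\<delta>/2)^2"
  shows "\<bar>P + (Q - P) * smoothstep ((\<tau> - \<alpha>)/(\<beta> - \<alpha>))\<bar> \<le> 13*e*\<tau>"
proof -
  define u where "u = (\<tau> - \<alpha>)/(\<beta> - \<alpha>)"
  have u: "0 \<le> u" "u \<le> 1" "u \<le> \<tau>/(\<beta> - \<alpha>)"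
    unfolding u_def using assms by (auto simp: divide_le_eq intro: divide_right_mono)
  note s = smoothstep_bounds[OF u(1,2)]
  have "\<bar>Q - P\<bar> * smoothstep u \<le> 12*e*\<tau>"
  proof (cases "\<beta> < \<delta>")
    case True
    have QP: "\<bar>Q - P\<bar> \<le> 2*e*\<beta>"
      using P Q[OF True] \<open>e > 0\<close> assms(1-3) mult_left_mono[of \<alpha> \<beta> e] by linarith
    show ?thesis
    proof (cases "\<beta> - \<alpha> \<ge> \<beta>/2")
      case True
      have "\<tau>/(\<beta> - \<alpha>) \<le> \<tau>/(\<beta>/2)"
        by (rule divide_left_mono) (use True assms in auto)
      then have "u \<le> \<tau>/(\<beta>/2)" using u(3) by linarith
      then have "\<bar>Q - P\<bar> * smoothstep u \<le> (2*e*\<beta>) * (3*(\<tau>/(\<beta>/2)))"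
        using QP s assms by (intro mult_mono) auto
      also have "\<dots> = 12*e*\<tau>" using assms by (simp add: field_simps)
      finally show ?thesis .
    next
      case False
      have "\<bar>Q - P\<bar> * smoothstep u \<le> 2*e*\<beta>"
        using QP s mult_left_le[of "smoothstep u" "\<bar>Q - P\<bar>"] by linarith
      also have "\<dots> \<le> 12*e*\<tau>" using False assms mult_left_mono[of \<beta> "2*\<tau>" e] by linarith
      finally show ?thesis .
    qed
  next
    case False
    have "\<delta>/2 < \<beta> - \<alpha>" using False assms by linarith
    then have "\<tau>/(\<beta> - \<alpha>) \<le> \<tau>/(\<delta>/2)"
      by (intro divide_left_mono) (use assms in auto)
    then have "u \<le> \<tau>/(\<delta>/2)" using u(3) by linarith
    then have "u^2 \<le> (\<tau>/(\<delta>/2))^2" using u by (simp add: power_mono)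
    then have "\<bar>Q - P\<bar> * smoothstep u \<le> (2*B) * (3*(\<tau>/(\<delta>/2))^2)"
      using B s by (intro mult_mono) auto
    also have "\<dots> = 3 * (2*B*\<tau>) * \<tau> / (\<delta>/2)^2" by (simp add: power2_eq_square)
    also have "\<dots> \<le> 3 * (e*(\<delta>/2)^2) * \<tau> / (\<delta>/2)^2"
      using B assms by (intro divide_right_mono mult_right_mono) auto
    also have "\<dots> \<le> 12*e*\<tau>" using assms by simp
    finally show ?thesis .
  qed
  moreover have "\<bar>P\<bar> \<le> e*\<tau>" using P assms mult_left_mono[of \<alpha> \<tau> e] by linarith
  ultimately show ?thesis
    unfolding u_def[symmetric] using abs_triangle_ineq[of P "(Q - P) * smoothstep u"] s
    by (simp add: abs_mult)
qed

lemma quadratic_tail_estimate: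
  fixes \<alpha> \<tau> e P R :: real
  assumes "0 \<le> \<alpha>" "\<alpha> \<le> \<tau>" "\<tau> \<le> e" "\<bar>P\<bar> \<le> e*\<alpha>" "\<bar>R\<bar> \<le> (\<tau> - \<alpha>)^2"
  shows "\<bar>P + R\<bar> \<le> 2*e*\<tau>"
proof -
  have "(\<tau> - \<alpha>)^2 \<le> \<tau> * \<tau>" using assms by (simp add: power2_eq_square mult_mono)
  also have "\<dots> \<le> e * \<tau>" using assms by (simp add: mult_right_mono)
  finally show ?thesis using assms mult_left_mono[of \<alpha> \<tau> e] by linarith
qed

definition gap_left :: "real set \<Rightarrow> real \<Rightarrow> real" where
  "gap_left C t = Sup (C \<inter> {..t})"

definition gap_right :: "real set \<Rightarrow> real \<Rightarrow> real" where
  "gap_right C t = Inf (C \<inter> {t..})"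

definition flat_extension :: "real set \<Rightarrow> (real \<Rightarrow> real) \<Rightarrow> real \<Rightarrow> real" where
  "flat_extension C \<phi> t =
     (if t \<in> C then \<phi> t
      else if t < Inf C then \<phi> (Inf C) - (Inf C - t)^2
      else if Sup C < t then \<phi> (Sup C) + (t - Sup C)^2
      else \<phi> (gap_left C t) + (\<phi> (gap_right C t) - \<phi> (gap_left C t)) *
             smoothstep ((t - gap_left C t) / (gap_right C t - gap_left C t)))"

locale flat_on_compact =
  fixes C :: "real set" and \<phi> :: "real \<Rightarrow> real"
  assumes compact: "compact C" and nonempty: "C \<noteq> {}"
    and flat: "\<forall>x\<in>C. (\<phi> has_field_derivative 0) (at x within C)"
begin

lemma Inf_mem: "Inf C \<in> C" and Sup_mem: "Sup C \<in> C"
  and Inf_le: "c \<in> C \<Longrightarrow> Inf C \<le> c" and le_Sup: "c \<in> C \<Longrightarrow> c \<le> Sup C"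
  using compact nonempty
  by (auto simp: closed_contains_Inf closed_contains_Sup compact_imp_closed cInf_lower cSup_upper
      bounded_imp_bdd_below bounded_imp_bdd_above compact_imp_bounded)

lemma gap_endpoints:
  assumes "t \<notin> C" "Inf C < t" "t < Sup C"
  shows "gap_left C t \<in> C" "gap_right C t \<in> C" "gap_left C t < t" "t < gap_right C t"
    and "\<And>c. c \<in> C \<Longrightarrow> c \<le> gap_left C t \<or> gap_right C t \<le> c"
proof -
  have closed: "closed (C \<inter> {..t})" "closed (C \<inter> {t..})"
    using compact by (simp_all add: closed_Int compact_imp_closed)
  have "gap_left C t \<in> C \<inter> {..t}"
    unfolding gap_left_def using Inf_mem assms by (intro closed_contains_Sup closed) auto
  moreover have "gap_right C t \<in> C \<inter> {t..}"
    unfolding gap_right_def using Sup_mem assms by (intro closed_contains_Inf closed) auto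
  ultimately show "gap_left C t \<in> C" "gap_right C t \<in> C" "gap_left C t < t" "t < gap_right C t"
    using assms by (auto simp: order.order_iff_strict)
  fix c assume "c \<in> C"
  then show "c \<le> gap_left C t \<or> gap_right C t \<le> c"
    unfolding gap_left_def gap_right_def
    by (cases "c \<le> t") (auto intro: cSup_upper cInf_lower)
qed

lemma gap_endpoints_const:
  assumes "t \<notin> C" "Inf C < t" "t < Sup C" "gap_left C t < s" "s < gap_right C t"
  shows "s \<notin> C" "Inf C < s" "s < Sup C" "gap_left C s = gap_left C t" "gap_right C s = gap_right C t"
proof -
  note g = gap_endpoints[OF assms(1-3)]
  show "s \<notin> C" using g assms by force
  show "Inf C < s" "s < Sup C" using Inf_le[OF g(1)] le_Sup[OF g(2)] assms by linarith+
  have "C \<inter> {..s} = C \<inter> {..t}" "C \<inter> {s..} = C \<inter> {t..}" using g assms by force+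
  then show "gap_left C s = gap_left C t" "gap_right C s = gap_right C t"
    unfolding gap_left_def gap_right_def by simp_all
qed

lemma bounded_values: "\<exists>B\<ge>0. \<forall>c\<in>C. \<bar>\<phi> c\<bar> \<le> B"
proof -
  have "continuous_on C \<phi>"
    unfolding continuous_on_eq_continuous_within using flat DERIV_continuous by blast
  then have "bounded (\<phi> ` C)" using compact by (simp add: compact_continuous_image compact_imp_bounded)
  then obtain B where "\<forall>y\<in>\<phi> ` C. \<bar>y\<bar> \<le> B" unfolding bounded_real by blast
  then show ?thesis using nonempty by (intro exI[of _ B]) auto
qed

lemma flat_extension_eq: "x \<in> C \<Longrightarrow> flat_extension C \<phi> x = \<phi> x"
  unfolding flat_extension_def by simp

lemma flat_extension_estimate_outside:
  assumes x: "x \<in> C" and t: "t < Inf C \<or> Sup C < t" and e: "\<bar>t - x\<bar> \<le> e"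
    and near: "\<forall>y\<in>C. \<bar>y - x\<bar> \<le> \<bar>t - x\<bar> \<longrightarrow> \<bar>\<phi> y - \<phi> x\<bar> \<le> e * \<bar>y - x\<bar>"
  shows "\<bar>flat_extension C \<phi> t - \<phi> x\<bar> \<le> 2*e*\<bar>t - x\<bar>"
  using t
proof
  assume t: "t < Inf C"
  have "t \<notin> C" using t Inf_le by force
  have "\<bar>(\<phi> (Inf C) - \<phi> x) + R\<bar> \<le> 2*e*(x - t)" if "R = - ((Inf C - t)^2)" for R
    using Inf_le[OF x] t e near Inf_mem that
    by (intro quadratic_tail_estimate[where \<alpha>="x - Inf C"]) auto
  from this[OF refl] show ?thesis
    using t \<open>t \<notin> C\<close> Inf_le[OF x] unfolding flat_extension_def by simp
next
  assume t: "Sup C < t"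
  have "t \<notin> C" "\<not> t < Inf C" using t le_Sup le_Sup[OF Inf_mem] by force+
  have "\<bar>(\<phi> (Sup C) - \<phi> x) + (t - Sup C)^2\<bar> \<le> 2*e*(t - x)"
    using le_Sup[OF x] t e near Sup_mem by (intro quadratic_tail_estimate[where \<alpha>="Sup C - x"]) auto
  then show ?thesis
    using t \<open>t \<notin> C\<close> \<open>\<not> t < Inf C\<close> le_Sup[OF x] unfolding flat_extension_def by simp
qed

lemma flat_extension_estimate_gap:
  assumes x: "x \<in> C" and t: "t \<notin> C" "Inf C < t" "t < Sup C" and e: "e > 0"
    and near: "\<forall>y\<in>C. \<bar>y - x\<bar> < \<delta> \<longrightarrow> \<bar>\<phi> y - \<phi> x\<bar> \<le> e * \<bar>y - x\<bar>"
    and B: "\<forall>c\<in>C. \<bar>\<phi> c\<bar> \<le> B"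
    and small: "\<bar>t - x\<bar> < \<delta>/2" "2*B*\<bar>t - x\<bar> \<le> e*(\<delta>/2)^2"
  shows "\<bar>flat_extension C \<phi> t - \<phi> x\<bar> \<le> 13*e*\<bar>t - x\<bar>"
proof -
  define a where "a = gap_left C t"
  define b where "b = gap_right C t"
  have ab: "a \<in> C" "b \<in> C" "a < t" "t < b" and side: "x \<le> a \<or> b \<le> x"
    using gap_endpoints[OF t] x unfolding a_def b_def by blast+
  have F: "flat_extension C \<phi> t = \<phi> a + (\<phi> b - \<phi> a) * smoothstep ((t - a)/(b - a))"
    using t unfolding flat_extension_def a_def b_def by simp
  have V: "\<bar>\<phi> b - \<phi> a\<bar> \<le> 2*B"
  proof -
    have "\<bar>\<phi> a\<bar> \<le> B" "\<bar>\<phi> b\<bar> \<le> B" using B ab by auto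
    then show ?thesis using abs_triangle_ineq4[of "\<phi> b" "\<phi> a"] by linarith
  qed
  have near': "\<bar>\<phi> y - \<phi> x\<bar> \<le> e * \<bar>y - x\<bar>" if "y \<in> C" "\<bar>y - x\<bar> < \<delta>" for y
    using near that by blast
  from side show ?thesis
  proof
    assume xa: "x \<le> a"
    have "\<bar>(\<phi> a - \<phi> x) + ((\<phi> b - \<phi> x) - (\<phi> a - \<phi> x)) *
        smoothstep (((t - x) - (a - x))/((b - x) - (a - x)))\<bar> \<le> 13*e*(t - x)"
    proof (rule smoothstep_interpolation_estimate[where \<delta>=\<delta> and B=B])
      show "\<bar>\<phi> a - \<phi> x\<bar> \<le> e * (a - x)" using near'[OF ab(1)] xa ab small by simp
      show "\<bar>\<phi> b - \<phi> x\<bar> \<le> e * (b - x)" if "b - x < \<delta>" using near'[OF ab(2)] xa ab that by simp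
      show "2*B*(t - x) \<le> e*(\<delta>/2)^2" using small xa ab by simp
    qed (use xa ab e small V in auto)
    then show ?thesis using F xa ab by (simp add: algebra_simps)
  next
    assume xb: "b \<le> x"
    have est: "\<bar>(\<phi> b - \<phi> x) + ((\<phi> a - \<phi> x) - (\<phi> b - \<phi> x)) *
        smoothstep (((x - t) - (x - b))/((x - a) - (x - b)))\<bar> \<le> 13*e*(x - t)"
    proof (rule smoothstep_interpolation_estimate[where \<delta>=\<delta> and B=B])
      show "\<bar>\<phi> b - \<phi> x\<bar> \<le> e * (x - b)" using near'[OF ab(2)] xb ab small by simp
      show "\<bar>\<phi> a - \<phi> x\<bar> \<le> e * (x - a)" if "x - a < \<delta>" using near'[OF ab(1)] xb ab that by simp
      show "\<bar>(\<phi> a - \<phi> x) - (\<phi> b - \<phi> x)\<bar> \<le> 2*B" using V by simp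
      show "2*B*(x - t) \<le> e*(\<delta>/2)^2" using small xb ab by simp
    qed (use xb ab e small in auto)
    have reflect: "((x - t) - (x - b))/((x - a) - (x - b)) = 1 - (t - a)/(b - a)"
      using ab by (simp add: field_simps)
    have "(\<phi> b - \<phi> x) + ((\<phi> a - \<phi> x) - (\<phi> b - \<phi> x)) *
        smoothstep (((x - t) - (x - b))/((x - a) - (x - b))) = flat_extension C \<phi> t - \<phi> x"
      unfolding F reflect smoothstep_reflect by (simp add: algebra_simps)
    then show ?thesis using est xb ab by simp
  qed
qed

lemma flat_extension_has_derivative_zero:
  assumes x: "x \<in> C"
  shows "(flat_extension C \<phi> has_field_derivative 0) (at x)"
  unfolding has_field_derivative_zero_within_iff flat_extension_eq[OF x]
proof (intro allI impI)
  fix \<epsilon> :: real assume "\<epsilon> > 0"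
  define e where "e = \<epsilon>/13"
  have e: "e > 0" using \<open>\<epsilon> > 0\<close> unfolding e_def by simp
  obtain \<delta> where \<delta>: "\<delta> > 0" "\<forall>y\<in>C. \<bar>y - x\<bar> < \<delta> \<longrightarrow> \<bar>\<phi> y - \<phi> x\<bar> \<le> e * \<bar>y - x\<bar>"
    using flat x e unfolding has_field_derivative_zero_within_iff by blast
  obtain B where B: "B \<ge> 0" "\<forall>c\<in>C. \<bar>\<phi> c\<bar> \<le> B" using bounded_values by blast
  define d where "d = min (\<delta>/2) (min e (e*(\<delta>/2)^2/(2*B+1)))"
  have "d > 0" unfolding d_def using \<delta> e B by auto
  moreover have "\<bar>flat_extension C \<phi> t - \<phi> x\<bar> \<le> \<epsilon> * \<bar>t - x\<bar>" if t: "\<bar>t - x\<bar> < d" for t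
  proof -
    have small: "\<bar>t - x\<bar> < \<delta>/2" "\<bar>t - x\<bar> \<le> e" "(2*B+1) * \<bar>t - x\<bar> \<le> e*(\<delta>/2)^2"
      using t B unfolding d_def by (auto simp: field_simps)
    have "2*B*\<bar>t - x\<bar> \<le> e*(\<delta>/2)^2" using small(3) by (simp add: distrib_right)
    consider "t \<in> C" | "t < Inf C \<or> Sup C < t" | "t \<notin> C" "Inf C < t" "t < Sup C"
      using Inf_mem Sup_mem by (metis linorder_neqE_linordered_idom)
    then have "\<bar>flat_extension C \<phi> t - \<phi> x\<bar> \<le> 13*e*\<bar>t - x\<bar>"
    proof cases
      case 1
      have "\<bar>\<phi> t - \<phi> x\<bar> \<le> e * \<bar>t - x\<bar>" using \<delta> small 1 by simp
      then show ?thesis using 1 e flat_extension_eq by (smt (verit) mult_right_mono abs_ge_zero)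
    next
      case 2
      have "\<bar>flat_extension C \<phi> t - \<phi> x\<bar> \<le> 2*e*\<bar>t - x\<bar>"
        using \<delta> small by (intro flat_extension_estimate_outside[OF x 2]) auto
      then show ?thesis using e by (smt (verit) mult_right_mono abs_ge_zero)
    qed (use flat_extension_estimate_gap[OF x _ _ _ e \<delta>(2) B(2)] small
         \<open>2*B*\<bar>t - x\<bar> \<le> e*(\<delta>/2)^2\<close> in blast)
    then show ?thesis unfolding e_def by simp
  qed
  ultimately show "\<exists>d>0. \<forall>y\<in>UNIV. \<bar>y - x\<bar> < d \<longrightarrow>
      \<bar>flat_extension C \<phi> y - \<phi> x\<bar> \<le> \<epsilon> * \<bar>y - x\<bar>" by blast
qed

lemma flat_extension_differentiable: "flat_extension C \<phi> differentiable (at t)"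
proof -
  consider "t \<in> C" | "t < Inf C" | "Sup C < t" | "t \<notin> C" "Inf C < t" "t < Sup C"
    using Inf_mem Sup_mem by (metis linorder_neqE_linordered_idom)
  then have "\<exists>D. (flat_extension C \<phi> has_real_derivative D) (at t)"
  proof cases
    case 1
    then show ?thesis using flat_extension_has_derivative_zero by blast
  next
    case 2
    have "((\<lambda>s. \<phi> (Inf C) - (Inf C - s)^2) has_real_derivative 2*(Inf C - t)) (at t)"
      by (auto intro!: derivative_eq_intros)
    then have "(flat_extension C \<phi> has_real_derivative 2*(Inf C - t)) (at t)"
    proof (rule has_field_derivative_transform_within_open[of _ _ _ "{..<Inf C}"])
      fix s assume "s \<in> {..<Inf C}"
      then show "\<phi> (Inf C) - (Inf C - s)^2 = flat_extension C \<phi> s"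
        using Inf_le unfolding flat_extension_def by force
    qed (use 2 in auto)
    then show ?thesis by blast
  next
    case 3
    have "((\<lambda>s. \<phi> (Sup C) + (s - Sup C)^2) has_real_derivative 2*(t - Sup C)) (at t)"
      by (auto intro!: derivative_eq_intros)
    then have "(flat_extension C \<phi> has_real_derivative 2*(t - Sup C)) (at t)"
    proof (rule has_field_derivative_transform_within_open[of _ _ _ "{Sup C<..}"])
      fix s assume "s \<in> {Sup C<..}"
      then show "\<phi> (Sup C) + (s - Sup C)^2 = flat_extension C \<phi> s"
        using le_Sup le_Sup[OF Inf_mem] unfolding flat_extension_def by force
    qed (use 3 in auto)
    then show ?thesis by blast
  next
    case 4
    define a where "a = gap_left C t"
    define b where "b = gap_right C t"
    have ab: "a < t" "t < b" using gap_endpoints[OF 4] unfolding a_def b_def by auto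
    have "((\<lambda>s. \<phi> a + (\<phi> b - \<phi> a) * smoothstep ((s - a)/(b - a))) has_real_derivative
        (\<phi> b - \<phi> a) * (6*((t - a)/(b - a))/(b - a) - 6*((t - a)/(b - a))^2/(b - a))) (at t)"
      using ab unfolding smoothstep_def by (auto intro!: derivative_eq_intros simp: power2_eq_square)
    then have "\<exists>D. (flat_extension C \<phi> has_real_derivative D) (at t)"
    proof (intro exI, rule has_field_derivative_transform_within_open[of _ _ _ "{a<..<b}"])
      fix s assume "s \<in> {a<..<b}"
      then show "\<phi> a + (\<phi> b - \<phi> a) * smoothstep ((s - a)/(b - a)) = flat_extension C \<phi> s"
        using gap_endpoints_const[OF 4, of s] unfolding flat_extension_def a_def b_def by simp
    qed (use ab in auto)
    then show ?thesis .
  qed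
  then show ?thesis using real_differentiable_def by blast
qed

lemma flat_extension_surj: "surj (flat_extension C \<phi>)"
proof -
  have cont: "continuous_on S (flat_extension C \<phi>)" for S
    using flat_extension_differentiable
    by (meson continuous_at_imp_continuous_on differentiable_imp_continuous_within)
  have "\<exists>t. flat_extension C \<phi> t = y" for y
  proof -
    define R where "R = \<bar>y\<bar> + \<bar>\<phi> (Inf C)\<bar> + \<bar>\<phi> (Sup C)\<bar> + 1"
    have R: "R \<ge> 1" unfolding R_def by simp
    then have R2: "R \<le> R^2" by (simp add: power2_eq_square)
    have "Inf C - R \<notin> C" "Sup C + R \<notin> C" "\<not> Sup C + R < Inf C"
      using Inf_le le_Sup le_Sup[OF Inf_mem] R by force+
    then have "flat_extension C \<phi> (Inf C - R) = \<phi> (Inf C) - R^2"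
      "flat_extension C \<phi> (Sup C + R) = \<phi> (Sup C) + R^2"
      using R unfolding flat_extension_def by auto
    moreover have "\<phi> (Inf C) - R^2 \<le> y" "y \<le> \<phi> (Sup C) + R^2"
      using R2 unfolding R_def by (auto simp: abs_le_iff)
    moreover have "Inf C - R \<le> Sup C + R" using le_Sup[OF Inf_mem] R by auto
    ultimately show ?thesis using IVT'[OF _ _ _ cont] by metis
  qed
  then show ?thesis by (metis surjI)
qed

end

lemma flat_function_extension:
  fixes C :: "real set" and \<phi> :: "real \<Rightarrow> real"
  assumes "compact C" and "\<forall>x\<in>C. (\<phi> has_field_derivative 0) (at x within C)"
  shows "\<exists>F. (\<forall>x\<in>C. F x = \<phi> x \<and> (F has_field_derivative 0) (at x)) \<and>
    (\<forall>x. F differentiable (at x)) \<and> surj F"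
proof (cases "C = {}")
  case True
  then show ?thesis by (intro exI[of _ "\<lambda>x. x"]) auto
next
  case False
  then interpret flat_on_compact C \<phi> using assms by unfold_locales
  show ?thesis
    using flat_extension_eq flat_extension_has_derivative_zero flat_extension_differentiable
      flat_extension_surj by blast
qed

section \<open>Periods and addresses of an odometer\<close>

lemma exists_residue_shift:
  fixes a b m :: nat
  assumes "m \<ge> 1"
  shows "\<exists>s<m. b mod m = (a + s) mod m"
proof -
  obtain m' where m': "m = Suc m'" using assms by (cases m) auto
  have "(a + (b + m' * a) mod m) mod m = (b + a * m) mod m"
    unfolding mod_add_right_eq by (simp add: m' algebra_simps)
  then show ?thesis using assms by (intro exI[of _ "(b + m' * a) mod m"]) simp
qed

locale nested_periods =
  fixes n :: "nat \<Rightarrow> nat"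
  assumes period_0: "n 0 = 1" and period_pos: "\<And>k. 1 \<le> n k"
    and period_dvd_Suc: "\<And>k. n k dvd n (Suc k)"

locale odometer_coordinates = nested_periods n for n :: "nat \<Rightarrow> nat" +
  fixes X :: "'a::metric_space set" and T :: "'a \<Rightarrow> 'a" and r :: "nat \<Rightarrow> 'a \<Rightarrow> nat"
  assumes maps_to: "\<And>x. x \<in> X \<Longrightarrow> T x \<in> X"
    and address_less: "\<And>k x. x \<in> X \<Longrightarrow> r k x < n k"
    and address_mod: "\<And>k x. x \<in> X \<Longrightarrow> r k x = r (Suc k) x mod n k"
    and address_step: "\<And>k x. x \<in> X \<Longrightarrow> r k (T x) = (r k x + 1) mod n k"
    and address_locally_constant: "\<And>k. \<exists>e>0. \<forall>x\<in>X. \<forall>y\<in>X. dist x y < e \<longrightarrow> r k x = r k y"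
    and address_separates: "\<And>x y. x \<in> X \<Longrightarrow> y \<in> X \<Longrightarrow> x \<noteq> y \<Longrightarrow> \<exists>k. r k x \<noteq> r k y"

locale odometer_orbit =
  fixes X :: "'a::metric_space set" and T :: "'a \<Rightarrow> 'a" and x0 :: 'a
  assumes odometer: "odometer X T"
    and recurrent: "regularly_recurrent X T x0"
    and dense_orbit: "closure {(T ^^ n) x0 | n. True} = X"
begin

definition orbit :: "nat \<Rightarrow> 'a" where
  "orbit a = (T ^^ a) x0"

definition close_implies_congruent :: "nat \<Rightarrow> real \<Rightarrow> bool" where
  "close_implies_congruent g \<eta> \<longleftrightarrow> (\<forall>a b. dist (orbit a) (orbit b) < \<eta> \<longrightarrow> a mod g = b mod g)"

definition congruent_implies_close :: "nat \<Rightarrow> real \<Rightarrow> bool" where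
  "congruent_implies_close g \<epsilon> \<longleftrightarrow> (\<forall>a b. a mod g = b mod g \<longrightarrow> dist (orbit a) (orbit b) < \<epsilon>)"

lemma compact: "compact X" and maps_to: "T ` X \<subseteq> X" and continuous: "continuous_on X T"
  and equicontinuous: "equicontinuous_sys X T" and x0_in: "x0 \<in> X"
  using odometer recurrent
  unfolding odometer_def dynamical_system_def regularly_recurrent_def by auto

lemma orbit_in: "orbit a \<in> X"
  unfolding orbit_def by (induction a) (use x0_in maps_to in auto)

lemma orbit_add: "orbit (c + a) = (T ^^ c) (orbit a)"
  unfolding orbit_def by (simp add: funpow_add)

lemma orbit_Suc: "orbit (Suc a) = T (orbit a)"
  unfolding orbit_def by simp

lemma orbit_shift:
  assumes "\<epsilon> > 0"
  shows "\<exists>\<delta>>0. \<forall>a b c. dist (orbit a) (orbit b) < \<delta> \<longrightarrow> dist (orbit (c + a)) (orbit (c + b)) < \<epsilon>"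
  using equicontinuous assms orbit_in unfolding equicontinuous_sys_def orbit_add by meson

lemma orbit_dense: "x \<in> X \<Longrightarrow> e > 0 \<Longrightarrow> \<exists>a. dist (orbit a) x < e"
  using dense_orbit closure_approachable[of x "{(T ^^ n) x0 | n. True}"]
  unfolding orbit_def by auto

lemma exists_congruent_implies_close:
  assumes "\<epsilon> > 0"
  shows "\<exists>m\<ge>1. congruent_implies_close m \<epsilon>"
proof -
  obtain \<delta> where \<delta>: "\<delta> > 0"
    "\<forall>a b c. dist (orbit a) (orbit b) < \<delta> \<longrightarrow> dist (orbit (c + a)) (orbit (c + b)) < \<epsilon>"
    using orbit_shift[OF assms] by blast
  have "openin (top_of_set X) (X \<inter> ball x0 \<delta>)" "x0 \<in> X \<inter> ball x0 \<delta>"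
    using x0_in \<delta> by auto
  then obtain m where m: "m \<ge> 1" "\<forall>i. dist (orbit (i * m)) (orbit 0) < \<delta>"
    using recurrent unfolding regularly_recurrent_def orbit_def by (fastforce simp: dist_commute)
  have "dist (orbit a) (orbit b) < \<epsilon>" if "a \<le> b" "a mod m = b mod m" for a b
  proof -
    have "m dvd b - a" using that mod_eq_dvd_iff_nat[of a b m] by simp
    then obtain i where "b - a = m * i" by (rule dvdE)
    then have "b = a + i * m" using that(1) by (subst mult.commute) arith
    then show ?thesis using \<delta>(2) m(2) by (metis add_0_right dist_commute)
  qed
  then have "congruent_implies_close m \<epsilon>"
    unfolding congruent_implies_close_def by (metis dist_commute nat_le_linear)
  then show ?thesis using m(1) by blast
qed

definition close_shift :: "nat \<Rightarrow> nat \<Rightarrow> bool" where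
  "close_shift m s \<longleftrightarrow> (\<forall>\<eta>>0. \<exists>a b. b mod m = (a + s) mod m \<and> dist (orbit a) (orbit b) < \<eta>)"

text \<open>These shifts form a subgroup of \<open>\<int>/m\<close>, generated by the next period.\<close>

lemma close_shift_0: "close_shift m 0"
  unfolding close_shift_def by (intro allI impI exI[of _ 0]) auto

lemma close_shift_modulus: "close_shift m m"
  unfolding close_shift_def by (intro allI impI exI[of _ 0]) auto

lemma close_shift_add:
  assumes "close_shift m s" "close_shift m s'"
  shows "close_shift m (s + s')"
  unfolding close_shift_def
proof (intro allI impI)
  fix \<eta> :: real assume "\<eta> > 0"
  then obtain \<delta> where \<delta>: "\<delta> > 0"
    "\<forall>a b c. dist (orbit a) (orbit b) < \<delta> \<longrightarrow> dist (orbit (c + a)) (orbit (c + b)) < \<eta>/2"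
    using orbit_shift[of "\<eta>/2"] by auto
  obtain a b where ab: "b mod m = (a + s) mod m" "dist (orbit a) (orbit b) < \<delta>"
    using assms(1) \<delta>(1) unfolding close_shift_def by blast
  obtain a' b' where ab': "b' mod m = (a' + s') mod m" "dist (orbit a') (orbit b') < \<delta>"
    using assms(2) \<delta>(1) unfolding close_shift_def by blast
  have "dist (orbit (a' + a)) (orbit (a' + b)) < \<eta>/2" "dist (orbit (b + a')) (orbit (b + b')) < \<eta>/2"
    using \<delta>(2) ab(2) ab'(2) by blast+
  then have "dist (orbit (a' + a)) (orbit (b + b')) < \<eta>"
    using dist_triangle[of "orbit (a' + a)" "orbit (b + b')" "orbit (a' + b)"] by (simp add: add.commute)
  moreover have "(b + b') mod m = ((a' + a) + (s + s')) mod m"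
    using mod_add_cong[OF ab(1) ab'(1)] by (simp add: ac_simps)
  ultimately show "\<exists>a b. b mod m = (a + (s + s')) mod m \<and> dist (orbit a) (orbit b) < \<eta>" by blast
qed

lemma close_shift_mult: "close_shift m s \<Longrightarrow> close_shift m (j * s)"
  by (induction j) (auto simp: close_shift_0 close_shift_add)

lemma close_shift_mod:
  assumes "close_shift m s" "s mod m = s' mod m"
  shows "close_shift m s'"
proof -
  have "(a + s) mod m = (a + s') mod m" for a using assms(2) by (rule mod_add_cong[OF refl])
  then show ?thesis using assms(1) unfolding close_shift_def by simp
qed

lemma close_shifts_are_multiples:
  assumes "m \<ge> 1"
  shows "\<exists>g>0. g dvd m \<and> (\<forall>s. close_shift m s \<longleftrightarrow> g dvd s)"
proof -
  define g where "g = (LEAST s. 0 < s \<and> close_shift m s)"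
  have g: "0 < g" "close_shift m g"
    using LeastI[of "\<lambda>s. 0 < s \<and> close_shift m s" m] assms close_shift_modulus
    unfolding g_def by auto
  have dvd: "g dvd s" if "close_shift m s" for s
  proof -
    obtain m' where m': "m = Suc m'" using assms by (cases m) auto
    have "close_shift m (s + (s div g * m') * g)"
      by (rule close_shift_add[OF that close_shift_mult[OF g(2)]])
    moreover have "s + (s div g * m') * g = s mod g + (s div g * g) * m"
      using m' div_mult_mod_eq[of s g] by (simp add: algebra_simps)
    ultimately have "close_shift m (s mod g)" using close_shift_mod by (metis mod_mult_self1)
    then have "s mod g = 0"
      using g(1) not_less_Least[of "s mod g" "\<lambda>s. 0 < s \<and> close_shift m s"] unfolding g_def
      by (metis mod_less_divisor neq0_conv)
    then show ?thesis by auto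
  qed
  have mult: "close_shift m s" if "g dvd s" for s
    using that close_shift_mult[OF g(2)] by (metis dvd_def mult.commute)
  show ?thesis
  proof (intro exI conjI allI)
    show "0 < g" "g dvd m" by (fact g(1), rule dvd[OF close_shift_modulus])
    show "close_shift m s \<longleftrightarrow> g dvd s" for s using dvd mult by blast
  qed
qed

lemma far_shifts_separated:
  "\<exists>\<eta>>0. \<forall>s<m. \<not> close_shift m s \<longrightarrow>
     (\<forall>a b. b mod m = (a + s) mod m \<longrightarrow> \<eta> \<le> dist (orbit a) (orbit b))"
proof -
  have "\<forall>s\<in>{..<m}. eventually (\<lambda>\<eta>. \<not> close_shift m s \<longrightarrow>
      (\<forall>a b. b mod m = (a + s) mod m \<longrightarrow> \<eta> \<le> dist (orbit a) (orbit b))) (at_right 0)"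
  proof
    fix s
    show "eventually (\<lambda>\<eta>. \<not> close_shift m s \<longrightarrow>
      (\<forall>a b. b mod m = (a + s) mod m \<longrightarrow> \<eta> \<le> dist (orbit a) (orbit b))) (at_right 0)"
    proof (cases "close_shift m s")
      case False
      then obtain \<eta>0 where "\<eta>0 > 0" "\<forall>a b. b mod m = (a + s) mod m \<longrightarrow> \<eta>0 \<le> dist (orbit a) (orbit b)"
        unfolding close_shift_def by (auto simp: not_less)
      then show ?thesis unfolding eventually_at_right_field by (intro exI[of _ \<eta>0]) force
    qed simp
  qed
  then have "eventually (\<lambda>\<eta>. \<eta> > 0 \<and> (\<forall>s\<in>{..<m}. \<not> close_shift m s \<longrightarrow>
      (\<forall>a b. b mod m = (a + s) mod m \<longrightarrow> \<eta> \<le> dist (orbit a) (orbit b)))) (at_right (0::real))"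
    by (intro eventually_conj eventually_ball_finite eventually_at_right_less) auto
  then show ?thesis
    using eventually_happens'[OF trivial_limit_at_right_real] unfolding lessThan_iff by blast
qed

lemma mod_eq_mod_dvd: "g dvd m \<Longrightarrow> b mod m = c mod m \<Longrightarrow> b mod g = c mod (g::nat)"
  by (metis mod_mod_cancel)

lemma exists_period_scale:
  assumes "\<epsilon> > 0"
  shows "\<exists>g \<eta>. g \<ge> 1 \<and> \<eta> > 0 \<and> close_implies_congruent g \<eta> \<and> congruent_implies_close g \<epsilon>"
proof -
  obtain \<delta> where \<delta>: "\<delta> > 0"
    "\<And>a b c. dist (orbit a) (orbit b) < \<delta> \<Longrightarrow> dist (orbit (c + a)) (orbit (c + b)) < \<epsilon>/3"
    using orbit_shift[of "\<epsilon>/3"] assms by auto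
  obtain m where m: "m \<ge> 1" "congruent_implies_close m (\<epsilon>/3)"
    using exists_congruent_implies_close[of "\<epsilon>/3"] assms by auto
  obtain g where g: "g > 0" "g dvd m" "\<And>s. close_shift m s \<longleftrightarrow> g dvd s"
    using close_shifts_are_multiples[OF m(1)] by auto
  obtain \<eta> where \<eta>: "\<eta> > 0" "\<And>s a b. s < m \<Longrightarrow> \<not> close_shift m s \<Longrightarrow>
      b mod m = (a + s) mod m \<Longrightarrow> \<eta> \<le> dist (orbit a) (orbit b)"
    using far_shifts_separated[of m] by auto
  have "close_implies_congruent g \<eta>"
    unfolding close_implies_congruent_def
  proof (intro allI impI)
    fix a b assume close: "dist (orbit a) (orbit b) < \<eta>"
    obtain s where s: "s < m" "b mod m = (a + s) mod m" using exists_residue_shift m(1) by blast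
    then have "g dvd s" using g(3) \<eta>(2) close by force
    then have "(a + s) mod g = a mod g" by (auto elim!: dvdE)
    then show "a mod g = b mod g" using mod_eq_mod_dvd[OF g(2) s(2)] by simp
  qed
  moreover have "congruent_implies_close g \<epsilon>"
    unfolding congruent_implies_close_def
  proof (intro allI impI)
    fix a b assume ab: "a mod g = b mod g"
    obtain s where s: "s < m" "b mod m = (a + s) mod m" using exists_residue_shift m(1) by blast
    have "a mod g = (a + s) mod g" using ab mod_eq_mod_dvd[OF g(2) s(2)] by (rule trans)
    then have "close_shift m s" using g(3) mod_eq_dvd_iff_nat[of a "a + s" g] by simp
    then obtain a' b' where ab': "b' mod m = (a' + s) mod m" "dist (orbit a') (orbit b') < \<delta>"
      using \<delta>(1) unfolding close_shift_def by blast
    obtain c where c: "a mod m = (a' + c) mod m" using exists_residue_shift m(1) by blast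
    have "(c + b') mod m = ((a' + c) + s) mod m"
      using mod_add_cong[OF refl ab'(1), of c] by (simp add: ac_simps)
    also have "\<dots> = b mod m" using mod_add_cong[OF c refl, of s] s(2) by simp
    finally have "dist (orbit (c + b')) (orbit b) < \<epsilon>/3"
      using m(2) unfolding congruent_implies_close_def by blast
    moreover have "a mod m = (c + a') mod m" using c by (simp add: add.commute)
    then have "dist (orbit a) (orbit (c + a')) < \<epsilon>/3"
      using m(2) unfolding congruent_implies_close_def by blast
    moreover have "dist (orbit (c + a')) (orbit (c + b')) < \<epsilon>/3" using \<delta>(2) ab'(2) .
    ultimately show "dist (orbit a) (orbit b) < \<epsilon>"
      using dist_triangle[of "orbit a" "orbit b" "orbit (c + a')"]
        dist_triangle[of "orbit (c + a')" "orbit b" "orbit (c + b')"] by linarith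
  qed
  ultimately show ?thesis using g(1) \<eta>(1) by (intro exI[of _ g] exI[of _ \<eta>]) simp
qed

lemma exists_refined_period_scale:
  assumes "\<eta>0 > 0" "close_implies_congruent g0 \<eta>0" "\<epsilon> > 0"
  shows "\<exists>g \<eta>. g \<ge> 1 \<and> \<eta> > 0 \<and> close_implies_congruent g \<eta> \<and> congruent_implies_close g \<epsilon> \<and> g0 dvd g"
proof -
  obtain g \<eta> where g: "g \<ge> 1" "\<eta> > 0" "close_implies_congruent g \<eta>"
    "congruent_implies_close g (min \<epsilon> \<eta>0)"
    using exists_period_scale[of "min \<epsilon> \<eta>0"] assms by auto
  have "congruent_implies_close g \<epsilon>"
    using g(4) unfolding congruent_implies_close_def by (meson less_le_trans min.cobounded1)
  moreover have "dist (orbit 0) (orbit g) < \<eta>0"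
    using g(4) unfolding congruent_implies_close_def by (metis min.strict_boundedE mod_0 mod_self)
  then have "0 mod g0 = g mod g0" using assms(2) unfolding close_implies_congruent_def by blast
  then have "g0 dvd g" by (simp add: dvd_eq_mod_eq_0)
  ultimately show ?thesis using g by blast
qed

primrec level :: "nat \<Rightarrow> nat \<times> real" where
  "level 0 = (1, 1)"
| "level (Suc k) = (SOME p. fst p \<ge> 1 \<and> snd p > 0 \<and> close_implies_congruent (fst p) (snd p) \<and>
      congruent_implies_close (fst p) (1/(real k + 1)) \<and> fst (level k) dvd fst p)"

abbreviation period :: "nat \<Rightarrow> nat" where "period k \<equiv> fst (level k)"
abbreviation radius :: "nat \<Rightarrow> real" where "radius k \<equiv> snd (level k)"

lemma level_Suc_exists:
  assumes "radius k > 0" "close_implies_congruent (period k) (radius k)"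
  shows "\<exists>p. fst p \<ge> 1 \<and> snd p > 0 \<and> close_implies_congruent (fst p) (snd p) \<and>
      congruent_implies_close (fst p) (1/(real k + 1)) \<and> period k dvd fst p"
  using exists_refined_period_scale[OF assms, of "1/(real k + 1)"] by auto

lemma level_scale: "period k \<ge> 1 \<and> radius k > 0 \<and> close_implies_congruent (period k) (radius k)"
proof (induction k)
  case 0
  then show ?case by (simp add: close_implies_congruent_def)
next
  case (Suc k)
  then show ?case using someI_ex[OF level_Suc_exists] by simp
qed

lemma level_Suc: "congruent_implies_close (period (Suc k)) (1/(real k + 1)) \<and> period k dvd period (Suc k)"
  using someI_ex[OF level_Suc_exists] level_scale[of k] by simp

definition address :: "nat \<Rightarrow> 'a \<Rightarrow> nat" where
  "address k x = (SOME a. dist (orbit a) x < radius k / 2) mod period k"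

lemma address_eq:
  assumes "dist (orbit a) x < radius k / 2"
  shows "address k x = a mod period k"
proof -
  define a' where "a' = (SOME a. dist (orbit a) x < radius k / 2)"
  have "dist (orbit a') x < radius k / 2" unfolding a'_def using assms by (rule someI)
  then have "dist (orbit a') (orbit a) < radius k"
    using assms dist_triangle2[of "orbit a'" "orbit a" x] by linarith
  then show ?thesis
    using level_scale[of k] unfolding close_implies_congruent_def address_def a'_def[symmetric] by blast
qed

lemma address_approx:
  assumes "x \<in> X" "e > 0"
  shows "\<exists>a. dist (orbit a) x < e \<and> address k x = a mod period k"
proof -
  have "min e (radius k / 2) > 0" using assms level_scale[of k] by simp
  then obtain a where "dist (orbit a) x < min e (radius k / 2)" using orbit_dense assms(1) by blast
  then show ?thesis using address_eq by auto
qed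

lemma address_less: "address k x < period k"
  unfolding address_def using level_scale[of k] by simp

lemma address_locally_constant: "\<exists>e>0. \<forall>x\<in>X. \<forall>y\<in>X. dist x y < e \<longrightarrow> address k x = address k y"
proof (intro exI[of _ "radius k / 4"] conjI ballI impI)
  show "radius k / 4 > 0" using level_scale[of k] by simp
  fix x y assume x: "x \<in> X" and "y \<in> X" and xy: "dist x y < radius k / 4"
  obtain a where a: "dist (orbit a) x < radius k / 4" using orbit_dense[OF x] \<open>radius k / 4 > 0\<close> by blast
  then have "dist (orbit a) y < radius k / 2" "dist (orbit a) x < radius k / 2"
    using xy dist_triangle[of "orbit a" y x] level_scale[of k] by linarith+
  then show "address k x = address k y" using address_eq by simp
qed

lemma address_step:
  assumes x: "x \<in> X"
  shows "address k (T x) = (address k x + 1) mod period k"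
proof -
  have e: "radius k / 2 > 0" using level_scale[of k] by simp
  obtain d where d: "d > 0" "\<forall>x'\<in>X. dist x' x < d \<longrightarrow> dist (T x') (T x) < radius k / 2"
    using continuous x e unfolding continuous_on_iff by blast
  obtain a where a: "dist (orbit a) x < d" "address k x = a mod period k"
    using address_approx[OF x d(1)] by blast
  have "dist (orbit (Suc a)) (T x) < radius k / 2" using d(2) orbit_in a(1) by (simp add: orbit_Suc)
  then show ?thesis using address_eq a(2) by (simp add: mod_Suc_eq)
qed

lemma address_mod: "x \<in> X \<Longrightarrow> address k x = address (Suc k) x mod period k"
proof -
  assume x: "x \<in> X"
  have "min (radius k) (radius (Suc k)) / 2 > 0" using level_scale[of k] level_scale[of "Suc k"] by simp
  then obtain a where "dist (orbit a) x < min (radius k) (radius (Suc k)) / 2"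
    using orbit_dense[OF x] by blast
  then have "address k x = a mod period k" "address (Suc k) x = a mod period (Suc k)"
    using address_eq by auto
  then show ?thesis using level_Suc[of k] by (simp add: mod_mod_cancel)
qed

lemma address_separates:
  assumes x: "x \<in> X" and y: "y \<in> X" and "x \<noteq> y"
  shows "\<exists>k. address k x \<noteq> address k y"
proof (rule ccontr)
  assume "\<nexists>k. address k x \<noteq> address k y"
  then have same: "address k x = address k y" for k by blast
  define \<epsilon> where "\<epsilon> = dist x y / 3"
  have \<epsilon>: "\<epsilon> > 0" unfolding \<epsilon>_def using assms by simp
  obtain k :: nat where k: "1/(real k + 1) < \<epsilon>"
    using \<epsilon> by (metis nat_approx_posE of_nat_Suc add.commute)
  obtain a where a: "dist (orbit a) x < \<epsilon>" "address (Suc k) x = a mod period (Suc k)"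
    using address_approx[OF x \<epsilon>] by blast
  obtain b where b: "dist (orbit b) y < \<epsilon>" "address (Suc k) y = b mod period (Suc k)"
    using address_approx[OF y \<epsilon>] by blast
  have "dist (orbit a) (orbit b) < 1/(real k + 1)"
    using level_Suc[of k] a(2) b(2) same unfolding congruent_implies_close_def by metis
  then have "dist x y < 3 * \<epsilon>"
    using a(1) b(1) k dist_triangle3[of x y "orbit a"] dist_triangle[of "orbit a" y "orbit b"] by linarith
  then show False unfolding \<epsilon>_def by simp
qed

lemma T_surj: "T ` X = X"
proof
  show "T ` X \<subseteq> X" using maps_to .
  have closed: "closed (T ` X)"
    using compact_continuous_image[OF continuous compact] by (rule compact_imp_closed)
  have "orbit 0 \<in> closure (T ` X)"
    unfolding closure_approachable
  proof (intro allI impI)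
    fix e :: real assume "e > 0"
    then obtain m where "m \<ge> 1" "congruent_implies_close m e"
      using exists_congruent_implies_close by blast
    then have "dist (orbit (Suc (m - 1))) (orbit 0) < e" unfolding congruent_implies_close_def by simp
    then show "\<exists>y\<in>T ` X. dist y (orbit 0) < e" using orbit_in by (auto simp: orbit_Suc)
  qed
  then have "orbit a \<in> T ` X" for a
    using closed orbit_in by (cases a) (auto simp: orbit_Suc)
  then have "{(T ^^ n) x0 | n. True} \<subseteq> T ` X" unfolding orbit_def by blast
  then show "X \<subseteq> T ` X" using closure_minimal[OF _ closed] dense_orbit by blast
qed

end

sublocale odometer_orbit \<subseteq> odometer_coordinates period X T address
proof unfold_locales
  fix k x y
  show "period 0 = 1" by simp
  show "1 \<le> period k" "period k dvd period (Suc k)" using level_scale level_Suc by blast+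
  show "x \<in> X \<Longrightarrow> T x \<in> X" using maps_to by blast
  show "address k x < period k" by (rule address_less)
  show "x \<in> X \<Longrightarrow> address k x = address (Suc k) x mod period k" by (rule address_mod)
  show "x \<in> X \<Longrightarrow> address k (T x) = (address k x + 1) mod period k" by (rule address_step)
  show "\<exists>e>0. \<forall>x\<in>X. \<forall>y\<in>X. dist x y < e \<longrightarrow> address k x = address k y"
    by (rule address_locally_constant)
  show "x \<in> X \<Longrightarrow> y \<in> X \<Longrightarrow> x \<noteq> y \<Longrightarrow> \<exists>k. address k x \<noteq> address k y"
    by (rule address_separates)
qed

section \<open>An embedding into the real line that flattens the odometer\<close>

lemma Suc_mod_inj:
  fixes a b N :: nat
  assumes "a < N" "b < N" "(a + 1) mod N = (b + 1) mod N"
  shows "a = b"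
  using assms by (auto simp: mod_Suc split: if_splits)

lemma mod_add_offset_Suc:
  fixes \<rho> \<beta> N :: nat
  assumes "\<rho> < N" "\<beta> < N" "\<rho> \<noteq> \<beta>"
  shows "((\<rho>+1) mod N + (N - 1 - \<beta>)) mod N = (\<rho> + (N - 1 - \<beta>)) mod N + 1"
proof (cases "\<rho> < \<beta>")
  case True
  have "(\<rho>+1) mod N = \<rho> + 1" using assms True by simp
  moreover have "(\<rho> + (N - 1 - \<beta>)) mod N = \<rho> + (N - 1 - \<beta>)" using assms True by simp
  moreover have "(\<rho> + 1 + (N - 1 - \<beta>)) mod N = \<rho> + 1 + (N - 1 - \<beta>)" using assms True by simp
  ultimately show ?thesis by simp
next
  case False
  then have gt: "\<beta> < \<rho>" using assms(3) by simp
  have e1: "(\<rho> + (N - 1 - \<beta>)) mod N = \<rho> - \<beta> - 1"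
  proof -
    have "\<rho> + (N - 1 - \<beta>) = (\<rho> - \<beta> - 1) + N" using assms gt by simp
    moreover have "\<rho> - \<beta> - 1 < N" using assms by simp
    ultimately show ?thesis by simp
  qed
  show ?thesis
  proof (cases "\<rho> + 1 < N")
    case True
    have A: "(\<rho>+1) mod N + (N - 1 - \<beta>) = (\<rho> - \<beta>) + N" using True assms gt by simp
    have "((\<rho>+1) mod N + (N - 1 - \<beta>)) mod N = (\<rho> - \<beta>) mod N" unfolding A by simp
    also have "\<dots> = \<rho> - \<beta>" using assms by simp
    also have "\<dots> = (\<rho> - \<beta> - 1) + 1" using gt by simp
    finally show ?thesis using e1 by simp
  next
    case False
    then have "\<rho> + 1 = N" using assms by simp
    then have "(\<rho>+1) mod N = 0" by simp
    moreover have "N - 1 - \<beta> < N" using assms by simp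
    ultimately show ?thesis using e1 gt \<open>\<rho> + 1 = N\<close> by simp
  qed
qed

context nested_periods
begin

text \<open>The embedding sends \<open>x\<close> to \<open>\<Sum>\<^sub>k weight k (r\<^sub>k x) * digit\<^sub>k x\<close> with
  \<open>digit\<^sub>k x = r\<^sub>k\<^sub>+\<^sub>1 x div n\<^sub>k < radix k\<close>. Along the rotation \<open>\<rho> \<mapsto> \<rho> + 1\<close> of
  \<open>\<int>/n\<^sub>k\<close> the exponent of the weight grows by one except at \<open>wrap_residue k\<close>; that residue
  is the largest earlier period below \<open>n\<^sub>k\<close>, which makes a point meet it only at finitely many
  levels where the period grows (\<open>wrap_residue_twice\<close>).\<close>

definition radix :: "nat \<Rightarrow> nat" where
  "radix k = n (Suc k) div n k"

definition contraction :: "nat \<Rightarrow> real" where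
  "contraction k = 1 / (real (Suc k) * real (radix k))"

definition wrap_residue :: "nat \<Rightarrow> nat" where
  "wrap_residue k = Max (insert 0 (n ` {j. j < k \<and> n j < n k}))"

definition weight_exponent :: "nat \<Rightarrow> nat \<Rightarrow> nat" where
  "weight_exponent k \<rho> = (\<rho> + (n k - 1 - wrap_residue k)) mod n k"

primrec scale :: "nat \<Rightarrow> real" where
  "scale 0 = 1"
| "scale (Suc k) = scale k * contraction k ^ (n k - 1) / (8 * real (radix (Suc k)) * 4 ^ Suc k)"

declare scale.simps(2)[simp del]

definition min_weight :: "nat \<Rightarrow> real" where
  "min_weight k = scale k * contraction k ^ (n k - 1)"

definition weight :: "nat \<Rightarrow> nat \<Rightarrow> real" where
  "weight k \<rho> = scale k * contraction k ^ weight_exponent k \<rho>"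

definition max_term :: "nat \<Rightarrow> real" where
  "max_term k = (real (radix k) - 1) * scale k"

definition tail_bound :: "nat \<Rightarrow> real" where
  "tail_bound k = min_weight k / (8 * 4^k)"

lemma period_dvd_mono: "i \<le> j \<Longrightarrow> n i dvd n j"
  by (induction j rule: dec_induct) (auto intro: dvd_trans period_dvd_Suc)

lemma period_mono: "i \<le> j \<Longrightarrow> n i \<le> n j"
  using period_dvd_mono period_pos[of j] by (simp add: dvd_imp_le)

lemma period_Suc_eq: "n (Suc k) = radix k * n k"
  and radix_ge_1: "radix k \<ge> 1"
proof -
  obtain d where d: "n (Suc k) = n k * d" using period_dvd_Suc by (rule dvdE)
  then have "radix k = d" unfolding radix_def using period_pos[of k] by simp
  then show "n (Suc k) = radix k * n k" "radix k \<ge> 1" using d period_pos[of "Suc k"] by auto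
qed

lemma contraction_pos: "0 < contraction k"
  and contraction_le_1: "contraction k \<le> 1"
proof -
  have "real (Suc k) * real (radix k) \<ge> 1 * 1" using radix_ge_1[of k] by (intro mult_mono) auto
  then show "0 < contraction k" "contraction k \<le> 1" unfolding contraction_def by auto
qed

lemma radix_contraction_le: "(real (radix k) - 1) * contraction k \<le> 1 / (real k + 1)"
proof -
  have q: "real (radix k) \<ge> 1" using radix_ge_1[of k] by simp
  have "(real (radix k) - 1) * contraction k = (real (radix k) - 1) / ((real k + 1) * real (radix k))"
    unfolding contraction_def by simp
  also have "\<dots> \<le> real (radix k) / ((real k + 1) * real (radix k))" using q by (intro divide_right_mono) auto
  also have "\<dots> = 1 / (real k + 1)" using q by simp
  finally show ?thesis .
qed

lemma scale_pos: "0 < scale k"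
proof (induction k)
  case (Suc k)
  then show ?case using radix_ge_1[of "Suc k"] contraction_pos[of k] by (simp add: scale.simps(2))
qed simp

lemma min_weight_pos: "0 < min_weight k"
  and min_weight_le_scale: "min_weight k \<le> scale k"
  using scale_pos[of k] contraction_pos[of k] contraction_le_1[of k]
  unfolding min_weight_def by (simp_all add: power_le_one mult_left_le)

lemma weight_exponent_less: "weight_exponent k \<rho> < n k"
  unfolding weight_exponent_def using period_pos[of k] by simp

lemma min_weight_le_weight: "min_weight k \<le> weight k \<rho>"
  and weight_le_scale: "weight k \<rho> \<le> scale k"
proof -
  show "min_weight k \<le> weight k \<rho>"
    unfolding min_weight_def weight_def using scale_pos[of k] contraction_pos[of k] contraction_le_1[of k]
      weight_exponent_less[of k \<rho>] by (intro mult_left_mono power_decreasing) auto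
  show "weight k \<rho> \<le> scale k"
    unfolding weight_def using scale_pos[of k] contraction_pos[of k] contraction_le_1[of k]
    by (simp add: power_le_one mult_left_le)
qed

lemma weight_pos: "0 < weight k \<rho>"
  using min_weight_pos min_weight_le_weight order.strict_trans2 by blast

lemma wrap_residue_less: "wrap_residue k < n k"
  unfolding wrap_residue_def using period_pos[of k] by (simp add: Max_less_iff)

lemma weight_step:
  assumes "\<rho> < n k" "\<rho> \<noteq> wrap_residue k"
  shows "weight k ((\<rho> + 1) mod n k) = contraction k * weight k \<rho>"
proof -
  have "weight_exponent k ((\<rho> + 1) mod n k) = weight_exponent k \<rho> + 1"
    unfolding weight_exponent_def using mod_add_offset_Suc[OF assms(1) wrap_residue_less assms(2)] .
  then show ?thesis unfolding weight_def by simp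
qed

lemma scale_Suc_radix: "scale (Suc k) * real (radix (Suc k)) = min_weight k / (8 * 4 ^ Suc k)"
  using radix_ge_1[of "Suc k"] unfolding min_weight_def by (simp add: field_simps scale.simps(2))

lemma max_term_Suc_le: "max_term (Suc k) \<le> min_weight k / (8 * 4 ^ Suc k)"
proof -
  have "max_term (Suc k) \<le> real (radix (Suc k)) * scale (Suc k)"
    unfolding max_term_def using scale_pos[of "Suc k"] by (intro mult_right_mono) auto
  then show ?thesis using scale_Suc_radix by (simp add: mult.commute)
qed

lemma min_weight_div_le: "min_weight k / (8 * 4 ^ Suc k) \<le> min_weight k / 4"
proof -
  have "(1::real) \<le> 4 ^ k" by simp
  then have "(4::real) \<le> 8 * 4 ^ Suc k" unfolding power_Suc by linarith
  then show ?thesis using min_weight_pos[of k] by (intro divide_left_mono) auto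
qed

lemma scale_Suc_le: "scale (Suc k) \<le> min_weight k / 4"
proof -
  have "scale (Suc k) \<le> scale (Suc k) * real (radix (Suc k))"
    using scale_pos[of "Suc k"] radix_ge_1[of "Suc k"] by (simp add: mult_le_cancel_left1)
  also have "\<dots> \<le> min_weight k / 4"
    unfolding scale_Suc_radix by (rule min_weight_div_le)
  finally show ?thesis .
qed

lemma min_weight_antimono: "i \<le> j \<Longrightarrow> min_weight j \<le> min_weight i"
proof (rule lift_Suc_antimono_le[of min_weight])
  show "min_weight (Suc k) \<le> min_weight k" for k
    using min_weight_le_scale[of "Suc k"] scale_Suc_le[of k] min_weight_pos[of k] by linarith
qed

lemma scale_le_geometric: "scale k \<le> (1/4)^k"
proof (induction k)
  case (Suc k)
  then show ?case using scale_Suc_le[of k] min_weight_le_scale[of k] by simp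
qed simp

lemma max_term_le_geometric: "max_term k \<le> (real (radix 0) + 1) * (1/4)^k"
proof (cases k)
  case (Suc k')
  have "max_term (Suc k') \<le> min_weight k' / 4"
    using max_term_Suc_le[of k'] min_weight_div_le[of k'] by linarith
  also have "\<dots> \<le> (1/4)^(Suc k')" using min_weight_le_scale[of k'] scale_le_geometric[of k'] by simp
  also have "\<dots> \<le> (real (radix 0) + 1) * (1/4)^(Suc k')" by simp
  finally show ?thesis using Suc by simp
qed (simp add: max_term_def)

lemma tail_bound_le_weight: "tail_bound k \<le> weight k \<rho> / (real k + 1)"
proof -
  have "real (Suc k) \<le> 2^k" using less_exp[of k] by (metis Suc_leI of_nat_le_iff of_nat_numeral of_nat_power)
  also have "(2::real)^k \<le> 4^k" by (rule power_mono) auto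
  also have "(4::real)^k \<le> 8 * 4^k" by simp
  finally have "real k + 1 \<le> 8 * 4^k" by simp
  then have "tail_bound k \<le> min_weight k / (real k + 1)"
    unfolding tail_bound_def using min_weight_pos[of k] by (intro divide_left_mono) auto
  also have "\<dots> \<le> weight k \<rho> / (real k + 1)" using min_weight_le_weight by (simp add: divide_right_mono)
  finally show ?thesis .
qed

lemma tail_bound_le_eighth: "tail_bound k \<le> weight k \<rho> / 8"
proof -
  have "(1::real) \<le> 4 ^ k" by simp
  then have "tail_bound k \<le> min_weight k / 8"
    unfolding tail_bound_def using min_weight_pos[of k] by (intro divide_left_mono) auto
  then show ?thesis using min_weight_le_weight[of k \<rho>] by linarith
qed

lemma tail_bound_le_geometric: "tail_bound k \<le> (1/4)^k"
proof -
  have "(1::real) \<le> 4 ^ k" by simp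
  then have "(1::real) \<le> 8 * 4 ^ k" by linarith
  then have "tail_bound k \<le> min_weight k"
    unfolding tail_bound_def using min_weight_pos[of k] by (simp add: divide_le_eq)
  then show ?thesis using min_weight_le_scale[of k] scale_le_geometric[of k] by linarith
qed

end

context odometer_coordinates
begin

definition digit :: "nat \<Rightarrow> 'a \<Rightarrow> nat" where
  "digit k x = r (Suc k) x div n k"

definition embedding_term :: "nat \<Rightarrow> 'a \<Rightarrow> real" where
  "embedding_term k x = weight k (r k x) * real (digit k x)"

definition embedding :: "'a \<Rightarrow> real" where
  "embedding x = (\<Sum>k. embedding_term k x)"

lemma address_0: "x \<in> X \<Longrightarrow> r 0 x = 0"
  using address_less[of x 0] period_0 by simp

lemma address_mod_le:
  assumes "x \<in> X" "i \<le> j"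
  shows "r i x = r j x mod n i"
  using assms(2)
proof (induction j rule: dec_induct)
  case base
  then show ?case using address_less[OF assms(1)] by simp
next
  case (step j)
  then show ?case
    using address_mod[OF assms(1), of j] period_dvd_mono[of i j] by (simp add: mod_mod_cancel)
qed

lemma address_Suc_eq: "x \<in> X \<Longrightarrow> r (Suc k) x = digit k x * n k + r k x"
  using address_mod[of x k] unfolding digit_def by simp

lemma digit_less: "x \<in> X \<Longrightarrow> digit k x < radix k"
  using address_less[of x "Suc k"] period_Suc_eq[of k] period_pos[of k]
  unfolding digit_def by (simp add: div_less_iff_less_mult)

lemma embedding_term_nonneg: "0 \<le> embedding_term k x"
  unfolding embedding_term_def using weight_pos[of k "r k x"] by simp

lemma embedding_term_le: "x \<in> X \<Longrightarrow> embedding_term k x \<le> max_term k"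
proof -
  assume "x \<in> X"
  then have "real (digit k x) \<le> real (radix k) - 1" using digit_less[of x k] by linarith
  then have "embedding_term k x \<le> scale k * (real (radix k) - 1)"
    unfolding embedding_term_def using weight_pos[of k "r k x"] weight_le_scale[of k "r k x"]
    by (intro mult_mono) auto
  then show ?thesis unfolding max_term_def by (simp add: mult.commute)
qed

lemma embedding_term_diff:
  "r k x = r k y \<Longrightarrow>
    embedding_term k x - embedding_term k y = weight k (r k x) * (real (digit k x) - real (digit k y))"
  unfolding embedding_term_def by (simp add: algebra_simps)

lemma embedding_term_eq_below:
  assumes "x \<in> X" "y \<in> X" "r k x = r k y" "j < k"
  shows "embedding_term j x = embedding_term j y"
proof -
  have "r j x = r j y" "r (Suc j) x = r (Suc j) y"
    using address_mod_le[OF assms(1), of _ k] address_mod_le[OF assms(2), of _ k] assms(3,4)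
    by (metis Suc_leI less_imp_le)+
  then show ?thesis unfolding embedding_term_def digit_def by simp
qed

lemma summable_embedding_term:
  assumes "x \<in> X"
  shows "summable (\<lambda>k. embedding_term k x)"
proof (rule summable_comparison_test)
  have "norm (embedding_term k x) \<le> (real (radix 0) + 1) * (1/4)^k" for k
    using embedding_term_nonneg[of k x] embedding_term_le[OF assms, of k] max_term_le_geometric[of k]
    by simp
  then show "\<exists>N. \<forall>k\<ge>N. norm (embedding_term k x) \<le> (real (radix 0) + 1) * (1/4)^k" by blast
  show "summable (\<lambda>k. (real (radix 0) + 1) * (1/4::real)^k)"
    by (intro summable_mult summable_geometric) simp
qed

lemma embedding_tail_bound:
  assumes x: "x \<in> X" and y: "y \<in> X"
  shows "\<bar>\<Sum>i. embedding_term (i + Suc k) x - embedding_term (i + Suc k) y\<bar> \<le> tail_bound k"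
proof -
  define G where "G i = min_weight k / (8 * 4 ^ Suc k) * (1/4)^i" for i
  have bound: "norm (embedding_term (i + Suc k) x - embedding_term (i + Suc k) y) \<le> G i" for i
  proof -
    have "\<bar>embedding_term (Suc (i + k)) x - embedding_term (Suc (i + k)) y\<bar> \<le> max_term (Suc (i + k))"
      using embedding_term_le[OF x, of "Suc (i + k)"] embedding_term_le[OF y, of "Suc (i + k)"]
        embedding_term_nonneg[of "Suc (i + k)" x] embedding_term_nonneg[of "Suc (i + k)" y] by linarith
    also have "\<dots> \<le> min_weight (i + k) / (8 * 4 ^ Suc (i + k))" by (rule max_term_Suc_le)
    also have "\<dots> \<le> min_weight k / (8 * 4 ^ Suc (i + k))"
      using min_weight_antimono[of k "i + k"] by (intro divide_right_mono) auto
    also have "\<dots> = G i" unfolding G_def by (simp add: power_add field_simps)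
    finally show ?thesis by simp
  qed
  have "summable G" unfolding G_def by (intro summable_mult summable_geometric) simp
  then have "\<bar>\<Sum>i. embedding_term (i + Suc k) x - embedding_term (i + Suc k) y\<bar> \<le> suminf G"
    using norm_suminf_le[OF bound] by simp
  also have "suminf G = min_weight k / (8 * 4 ^ Suc k) * (4/3)"
    unfolding G_def by (subst suminf_mult) (simp_all add: suminf_geometric)
  also have "\<dots> \<le> tail_bound k" unfolding tail_bound_def using min_weight_pos[of k] by (simp add: field_simps)
  finally show ?thesis .
qed

lemma embedding_diff_dominant:
  assumes x: "x \<in> X" and y: "y \<in> X" and eq: "r k x = r k y"
  shows "\<bar>(embedding x - embedding y) - (embedding_term k x - embedding_term k y)\<bar> \<le> tail_bound k"
proof -
  define d where "d j = embedding_term j x - embedding_term j y" for j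
  have "summable d" unfolding d_def
    using summable_embedding_term[OF x] summable_embedding_term[OF y] by (rule summable_diff)
  then have "suminf d = (\<Sum>i. d (i + Suc k)) + (\<Sum>j<Suc k. d j)" by (rule suminf_split_initial_segment)
  moreover have "(\<Sum>j<Suc k. d j) = d k" using embedding_term_eq_below[OF x y eq] unfolding d_def by simp
  moreover have "embedding x - embedding y = suminf d" unfolding embedding_def d_def
    using summable_embedding_term[OF x] summable_embedding_term[OF y] by (rule suminf_diff)
  ultimately show ?thesis using embedding_tail_bound[OF x y, of k] unfolding d_def by simp
qed

lemma embedding_diff_lower:
  assumes x: "x \<in> X" and y: "y \<in> X" and eq: "r k x = r k y" and ne: "r (Suc k) x \<noteq> r (Suc k) y"
  shows "(7/8) * weight k (r k x) \<le> \<bar>embedding x - embedding y\<bar>"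
proof -
  have "digit k x \<noteq> digit k y" using address_Suc_eq[OF x, of k] address_Suc_eq[OF y, of k] eq ne by auto
  then have "1 \<le> \<bar>real (digit k x) - real (digit k y)\<bar>" by linarith
  then have "weight k (r k x) \<le> \<bar>embedding_term k x - embedding_term k y\<bar>"
    unfolding embedding_term_diff[OF eq] using weight_pos[of k "r k x"]
    by (simp add: abs_mult mult_le_cancel_left1)
  then show ?thesis
    using embedding_diff_dominant[OF x y eq] tail_bound_le_eighth[of k "r k x"] by linarith
qed

lemma embedding_diff_upper:
  assumes x: "x \<in> X" and y: "y \<in> X" and eq: "r k x = r k y"
  shows "\<bar>embedding x - embedding y\<bar> \<le> (real (radix k) - 1) * weight k (r k x) + tail_bound k"
proof -
  have "\<bar>real (digit k x) - real (digit k y)\<bar> \<le> real (radix k) - 1"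
    using digit_less[OF x, of k] digit_less[OF y, of k] by linarith
  then have "\<bar>embedding_term k x - embedding_term k y\<bar> \<le> (real (radix k) - 1) * weight k (r k x)"
    unfolding embedding_term_diff[OF eq] using weight_pos[of k "r k x"]
    by (simp add: abs_mult mult.commute mult_right_mono)
  then show ?thesis using embedding_diff_dominant[OF x y eq] by linarith
qed


lemma wrap_residue_twice:
  assumes x: "x \<in> X" and k12: "k1 < k2" and g1: "n k1 < n (Suc k1)"
    and b1: "r k1 x = wrap_residue k1" and b2: "r k2 x = wrap_residue k2"
  shows "n k1 = 1"
proof (rule ccontr)
  assume nk1: "n k1 \<noteq> 1"
  define S2 where "S2 = insert 0 (n ` {j. j < k2 \<and> n j < n k2})"
  have fin2: "finite S2" unfolding S2_def by simp
  have "n k1 < n k2" using g1 period_mono[of "Suc k1" k2] k12 by simp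
  then have "n k1 \<in> S2" unfolding S2_def using k12 by auto
  then have ge: "n k1 \<le> wrap_residue k2" unfolding wrap_residue_def S2_def[symmetric] using fin2 by simp
  have "S2 \<noteq> {}" unfolding S2_def by simp
  then have "wrap_residue k2 \<in> S2" unfolding wrap_residue_def S2_def[symmetric] using fin2 by (intro Max_in) auto
  moreover have "wrap_residue k2 \<noteq> 0" using ge period_pos[of k1] by simp
  ultimately obtain j where j: "j < k2" "wrap_residue k2 = n j" unfolding S2_def by auto
  have dv: "n k1 dvd n j"
  proof (cases "k1 \<le> j")
    case True then show ?thesis by (rule period_dvd_mono)
  next
    case False
    then have "n j dvd n k1" by (intro period_dvd_mono) simp
    moreover have "n j \<le> n k1" using False period_mono by simp
    ultimately have "n j = n k1" using ge j(2) by simp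
    then show ?thesis by simp
  qed
  have "r k1 x = r k2 x mod n k1" using address_mod_le[OF x] k12 by simp
  also have "\<dots> = 0" using b2 j(2) dv by simp
  finally have "wrap_residue k1 = 0" using b1 by simp
  moreover have "k1 \<noteq> 0" using nk1 period_0 by (metis)
  moreover have "1 < n k1" using nk1 period_pos[of k1] by simp
  ultimately have "0 \<in> {j. j < k1 \<and> n j < n k1}" using period_0 by auto
  then have "n 0 \<in> insert 0 (n ` {j. j < k1 \<and> n j < n k1})" by blast
  then have "n 0 \<le> wrap_residue k1" unfolding wrap_residue_def by simp
  then show False using \<open>wrap_residue k1 = 0\<close> period_0 by simp
qed

lemma eventually_not_wrap:
  assumes x: "x \<in> X"
  shows "eventually (\<lambda>k. n k < n (Suc k) \<longrightarrow> r k x \<noteq> wrap_residue k) sequentially"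
proof -
  define S where "S = {k. n k < n (Suc k) \<and> r k x = wrap_residue k}"
  have "finite S"
  proof (rule ccontr)
    assume "infinite S"
    then obtain k1 k2 k3 where "k1 \<in> S" "k2 \<in> S" "k3 \<in> S" "k1 < k2" "k2 < k3"
      by (metis infinite_nat_iff_unbounded)
    then have "n k2 = 1" "n k1 < n (Suc k1)" "n (Suc k1) \<le> n k2"
      using wrap_residue_twice[OF x, of k2 k3] period_mono[of "Suc k1" k2] unfolding S_def by auto
    then show False using period_pos[of k1] by linarith
  qed
  then obtain K where "S \<subseteq> {..<K}" using finite_nat_bounded by blast
  then show ?thesis unfolding S_def eventually_sequentially by (intro exI[of _ K]) auto
qed

lemma first_address_difference:
  assumes x: "x \<in> X" and y: "y \<in> X" and ne: "x \<noteq> y"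
  shows "\<exists>k. r k x = r k y \<and> r (Suc k) x \<noteq> r (Suc k) y"
proof -
  obtain m where m: "r m x \<noteq> r m y" using address_separates[OF x y ne] by blast
  define m0 where "m0 = (LEAST m. r m x \<noteq> r m y)"
  have m0: "r m0 x \<noteq> r m0 y" unfolding m0_def using m by (rule LeastI)
  have lt: "\<And>i. i < m0 \<Longrightarrow> r i x = r i y" unfolding m0_def using not_less_Least by blast
  have "m0 \<noteq> 0" using m0 address_0[OF x] address_0[OF y] by (metis)
  then obtain k where "m0 = Suc k" by (cases m0) auto
  then show ?thesis using m0 lt[of k] by auto
qed

lemma embedding_separation:
  assumes x: "x \<in> X" and y: "y \<in> X" and e: "r k x = r k y" and ne: "r (Suc k) x \<noteq> r (Suc k) y"
  shows "(7/8) * min_weight k \<le> \<bar>embedding x - embedding y\<bar>"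
  using embedding_diff_lower[OF assms] min_weight_le_weight[of k "r k x"] by linarith

lemma inj_on_embedding: "inj_on (embedding) X"
proof (rule inj_onI, rule ccontr)
  fix x y assume x: "x \<in> X" and y: "y \<in> X" and eq: "embedding x = embedding y" and ne: "x \<noteq> y"
  obtain k where k: "r k x = r k y" "r (Suc k) x \<noteq> r (Suc k) y" using first_address_difference[OF x y ne] by blast
  show False using embedding_separation[OF x y k] min_weight_pos[of k] eq by simp
qed

lemma continuous_on_embedding: "continuous_on X embedding"
  unfolding continuous_on_iff
proof (intro ballI allI impI)
  fix x e assume x: "x \<in> X" and e: "(0::real) < e"
  obtain k where k: "(1/4)^k < e" using real_arch_pow_inv[OF e, of "1/4"] by auto
  obtain d where d: "d > 0" "\<forall>x\<in>X. \<forall>y\<in>X. dist x y < d \<longrightarrow> r (Suc k) x = r (Suc k) y"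
    using address_locally_constant by blast
  have "dist (embedding y) (embedding x) < e" if y: "y \<in> X" and "dist y x < d" for y
  proof -
    have eq: "r (Suc k) y = r (Suc k) x" using d(2) x y \<open>dist y x < d\<close> by blast
    then have "r k y = r k x" using address_mod[OF y] address_mod[OF x] by metis
    moreover have "embedding_term k y = embedding_term k x" using embedding_term_eq_below[OF y x eq] by simp
    ultimately have "\<bar>embedding y - embedding x\<bar> \<le> tail_bound k"
      using embedding_diff_dominant[OF y x] by fastforce
    then show ?thesis using tail_bound_le_geometric[of k] k by (simp add: dist_real_def)
  qed
  then show "\<exists>d>0. \<forall>x'\<in>X. dist x' x < d \<longrightarrow> dist (embedding x') (embedding x) < e"
    using d(1) by blast
qed

lemma inj_on_T: "inj_on T X"
proof (rule inj_onI, rule ccontr)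
  fix x y assume x: "x \<in> X" and y: "y \<in> X" and "T x = T y" "x \<noteq> y"
  then obtain k where "r k x \<noteq> r k y" using address_separates by blast
  moreover have "(r k x + 1) mod n k = (r k y + 1) mod n k"
    using address_step[OF x, of k] address_step[OF y, of k] \<open>T x = T y\<close> by simp
  ultimately show False using Suc_mod_inj address_less[OF x] address_less[OF y] by blast
qed

lemma period_grows_at_first_difference:
  assumes x: "x \<in> X" and y: "y \<in> X" and "r k x = r k y" "r (Suc k) x \<noteq> r (Suc k) y"
  shows "n k < n (Suc k)"
proof (rule ccontr)
  assume "\<not> n k < n (Suc k)"
  then have "n (Suc k) = n k" using period_mono[of k "Suc k"] by simp
  then have "r (Suc k) z = r k z" if "z \<in> X" for z
    using address_less[OF that, of "Suc k"] address_mod[OF that, of k] by simp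
  then show False using assms by simp
qed

lemma embedding_step_contraction:
  assumes x: "x \<in> X" and y: "y \<in> X" and k: "r k x = r k y" "r (Suc k) x \<noteq> r (Suc k) y"
    and no_wrap: "r k x \<noteq> wrap_residue k"
  shows "\<bar>embedding (T x) - embedding (T y)\<bar> \<le> 3 / (real k + 1) * \<bar>embedding x - embedding y\<bar>"
proof -
  define w where "w = weight k (r k x)"
  have Tk: "r k (T x) = r k (T y)" using address_step[OF x, of k] address_step[OF y, of k] k(1) by simp
  have "weight k (r k (T x)) = contraction k * w"
    unfolding w_def address_step[OF x] using weight_step[OF address_less[OF x] no_wrap] .
  then have "\<bar>embedding (T x) - embedding (T y)\<bar> \<le> ((real (radix k) - 1) * contraction k) * w + tail_bound k"
    using embedding_diff_upper[OF maps_to[OF x] maps_to[OF y] Tk] by (simp add: mult.assoc)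
  also have "\<dots> \<le> w / (real k + 1) + w / (real k + 1)"
  proof -
    have "((real (radix k) - 1) * contraction k) * w \<le> (1 / (real k + 1)) * w"
      using radix_contraction_le[of k] weight_pos[of k "r k x"] unfolding w_def
      by (intro mult_right_mono) auto
    then show ?thesis using tail_bound_le_weight[of k "r k x"] unfolding w_def by simp
  qed
  also have "\<dots> = (2 * w) / (real k + 1)" by simp
  also have "\<dots> \<le> (3 * ((7/8) * w)) / (real k + 1)"
    using weight_pos[of k "r k x"] unfolding w_def by (intro divide_right_mono) auto
  also have "\<dots> = 3 / (real k + 1) * ((7/8) * w)" by simp
  also have "\<dots> \<le> 3 / (real k + 1) * \<bar>embedding x - embedding y\<bar>"
    using embedding_diff_lower[OF x y k] unfolding w_def by (intro mult_left_mono) auto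
  finally show ?thesis .
qed

lemma embedding_conjugate_flat:
  assumes x: "x \<in> X" and e: "e > 0"
  shows "\<exists>d>0. \<forall>y\<in>X. \<bar>embedding y - embedding x\<bar> < d \<longrightarrow>
    \<bar>embedding (T y) - embedding (T x)\<bar> \<le> e * \<bar>embedding y - embedding x\<bar>"
proof -
  obtain K where K: "\<And>k. k \<ge> K \<Longrightarrow> n k < n (Suc k) \<Longrightarrow> r k x \<noteq> wrap_residue k"
    using eventually_not_wrap[OF x] unfolding eventually_sequentially by blast
  define k0 where "k0 = K + nat \<lceil>3/e\<rceil>"
  have "3/e \<le> real k0 + 1" unfolding k0_def by linarith
  then have k0e: "3 / (real k0 + 1) \<le> e"
    using e by (simp add: divide_le_eq mult.commute)
  have "\<bar>embedding (T y) - embedding (T x)\<bar> \<le> e * \<bar>embedding y - embedding x\<bar>"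
    if y: "y \<in> X" and close: "\<bar>embedding y - embedding x\<bar> < (7/8) * min_weight k0" for y
  proof (cases "y = x")
    case False
    then obtain k where k: "r k x = r k y" "r (Suc k) x \<noteq> r (Suc k) y"
      using first_address_difference[OF x y] by metis
    have "k0 \<le> k"
    proof (rule ccontr)
      assume "\<not> k0 \<le> k"
      then have "(7/8) * min_weight k0 \<le> \<bar>embedding x - embedding y\<bar>"
        using embedding_separation[OF x y k] min_weight_antimono[of k k0] by linarith
      then show False using close by (simp add: abs_minus_commute)
    qed
    then have "r k x \<noteq> wrap_residue k"
      using K period_grows_at_first_difference[OF x y k] unfolding k0_def by simp
    then have "\<bar>embedding (T x) - embedding (T y)\<bar> \<le> 3 / (real k + 1) * \<bar>embedding x - embedding y\<bar>"
      by (rule embedding_step_contraction[OF x y k])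
    moreover have "3 / (real k + 1) \<le> 3 / (real k0 + 1)"
      using \<open>k0 \<le> k\<close> by (intro divide_left_mono) auto
    then have "3 / (real k + 1) * \<bar>embedding x - embedding y\<bar> \<le> e * \<bar>embedding x - embedding y\<bar>"
      using k0e by (intro mult_right_mono) auto
    ultimately show ?thesis by (simp add: abs_minus_commute)
  qed simp
  then show ?thesis using min_weight_pos[of k0] by (intro exI[of _ "(7/8) * min_weight k0"]) auto
qed

lemma conjugate_has_derivative_zero:
  assumes q: "homeomorphism X (embedding ` X) embedding q"
  shows "\<forall>y\<in>embedding ` X.
    ((embedding \<circ> T \<circ> q) has_field_derivative 0) (at y within embedding ` X)"
proof
  fix y assume "y \<in> embedding ` X"
  then obtain x where x: "x \<in> X" "y = embedding x" by blast
  have q_embedding: "q (embedding z) = z" if "z \<in> X" for z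
    using q that unfolding homeomorphism_def by blast
  show "((embedding \<circ> T \<circ> q) has_field_derivative 0) (at y within embedding ` X)"
    unfolding has_field_derivative_zero_within_iff
  proof (intro allI impI)
    fix e :: real assume "e > 0"
    then obtain d where "d > 0" "\<forall>z\<in>X. \<bar>embedding z - embedding x\<bar> < d \<longrightarrow>
        \<bar>embedding (T z) - embedding (T x)\<bar> \<le> e * \<bar>embedding z - embedding x\<bar>"
      using embedding_conjugate_flat[OF x(1)] by blast
    then show "\<exists>d>0. \<forall>z\<in>embedding ` X. \<bar>z - y\<bar> < d \<longrightarrow>
        \<bar>(embedding \<circ> T \<circ> q) z - (embedding \<circ> T \<circ> q) y\<bar> \<le> e * \<bar>z - y\<bar>"
      using x q_embedding by auto
  qed
qed

end

theorem theoremA: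
  fixes X :: "'a::metric_space set" and T :: "'a \<Rightarrow> 'a"
  assumes "odometer X T"
  shows "\<exists>(C::real set) (f::real \<Rightarrow> real).
           (\<exists>g. homeomorphism C C f g) \<and>
           (\<exists>h k. homeomorphism X C h k \<and> (\<forall>x\<in>X. h (T x) = f (h x))) \<and>
           (\<forall>x\<in>C. (f has_field_derivative 0) (at x within C)) \<and>
           (\<forall>x. f differentiable (at x)) \<and> surj f"
proof -
  obtain x0 where "regularly_recurrent X T x0" "closure {(T ^^ n) x0 | n. True} = X"
    using assms unfolding odometer_def by blast
  then interpret odometer_orbit X T x0 using assms by unfold_locales
  define C where "C = embedding ` X"
  obtain q where q: "homeomorphism X C embedding q"
    using homeomorphism_compact[OF compact continuous_on_embedding C_def[symmetric] inj_on_embedding]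
    by blast
  have q_embedding: "\<forall>x\<in>X. q (embedding x) = x" using q unfolding homeomorphism_def by blast
  obtain T' where "homeomorphism X X T T'"
    using homeomorphism_compact[OF compact continuous T_surj inj_on_T] by blast
  from homeomorphism_compose[OF homeomorphism_compose[OF homeomorphism_symD[OF q] this] q]
  have hom: "homeomorphism C C (embedding \<circ> T \<circ> q) (embedding \<circ> T' \<circ> q)"
    by (simp add: comp_assoc)
  have "compact C" unfolding C_def by (rule compact_continuous_image[OF continuous_on_embedding compact])
  moreover have "\<forall>y\<in>C. ((embedding \<circ> T \<circ> q) has_field_derivative 0) (at y within C)"
    using conjugate_has_derivative_zero[OF q[unfolded C_def]] unfolding C_def .
  ultimately have "\<exists>F. (\<forall>y\<in>C. F y = (embedding \<circ> T \<circ> q) y \<and> (F has_field_derivative 0) (at y)) \<and>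
      (\<forall>t. F differentiable (at t)) \<and> surj F"
    by (rule flat_function_extension)
  then obtain F where F: "\<forall>y\<in>C. F y = (embedding \<circ> T \<circ> q) y \<and> (F has_field_derivative 0) (at y)"
    "\<forall>t. F differentiable (at t)" "surj F"
    by blast
  show ?thesis
  proof (rule exI[of _ C], rule exI[of _ F], intro conjI)
    show "\<exists>g. homeomorphism C C F g"
      using homeomorphism_cong[OF hom refl refl, of F "embedding \<circ> T' \<circ> q"] F(1) by auto
    show "\<exists>h k. homeomorphism X C h k \<and> (\<forall>x\<in>X. h (T x) = F (h x))"
      using q F(1) q_embedding unfolding C_def by auto
    show "\<forall>y\<in>C. (F has_field_derivative 0) (at y within C)"
      using F(1) by (auto intro: has_field_derivative_at_within)
  qed (use F in auto)
qed

end
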